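(* Let $\langle S\mid R\rangle\cong\mathbb{Z}^n$ be a 3-presentation, and suppose $g^ah^b$ represents the identity in $\langle S\mid R\rangle$, where $g,h\in S$ are distinct and $a,b$ are nonzero, relatively prime integers. Let $i$ be a new generator not in $S$, let $S'=(S\cup\{i\})\setminus\{g,h\}$, and let $R'$ be obtained from $R$ by replacing every occurrence of $g$ by $i^{b}$ and every occurrence of $h$ by $i^{-a}$ in each relation. Then $\langle S'\mid R'\rangle$ is a 3-presentation and $\langle S'\mid R'\rangle\cong\mathbb{Z}^n$.
   Context: A 3-presentation of a group $G$ is a group presentation $\langle S\mid R\rangle\cong G$ (with $S,R$ finite) in which each relation in $R$ is either the empty word, or $g^a$, or $g^ah^b$, or $g^ah^bi^c$, where $g,h,i\in S$ (not necessarily distinct) and $a,b,c\in\mathbb{Z}$ (after substitution, a product such as $(i^b)^{a'}(i^{-a})^{b'}$ is read as a single power of $i$). *)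

theory Defs
  imports "HOL-Algebra.Algebra"
begin

text \<open>A word in the generators: a list of syllables (x, k) standing for x^k.\<close>
type_synonym 'a word = "('a \<times> int) list"

definition word_on :: "'a set \<Rightarrow> 'a word \<Rightarrow> bool" where
  "word_on S w \<longleftrightarrow> fst ` set w \<subseteq> S"

inductive pres_eq :: "'a set \<Rightarrow> 'a word set \<Rightarrow> 'a word \<Rightarrow> 'a word \<Rightarrow> bool"
  for S :: "'a set" and R :: "'a word set" where
  refl: "word_on S w \<Longrightarrow> pres_eq S R w w"
| sym: "pres_eq S R u v \<Longrightarrow> pres_eq S R v u"
| trans: "pres_eq S R u v \<Longrightarrow> pres_eq S R v w \<Longrightarrow> pres_eq S R u w"
| app: "pres_eq S R u u' \<Longrightarrow> pres_eq S R v v' \<Longrightarrow> pres_eq S R (u @ v) (u' @ v')"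
| merge: "x \<in> S \<Longrightarrow> pres_eq S R [(x, a), (x, b)] [(x, a + b)]"
| zero: "x \<in> S \<Longrightarrow> pres_eq S R [(x, 0)] []"
| rel: "r \<in> R \<Longrightarrow> word_on S r \<Longrightarrow> pres_eq S R r []"

definition pres_class :: "'a set \<Rightarrow> 'a word set \<Rightarrow> 'a word \<Rightarrow> 'a word set" where
  "pres_class S R w = {v. pres_eq S R w v}"

definition pres_group :: "'a set \<Rightarrow> 'a word set \<Rightarrow> 'a word set monoid" where
  "pres_group S R =
     \<lparr> carrier = {pres_class S R w | w. word_on S w},
       monoid.mult = (\<lambda>A B. {w. \<exists>u\<in>A. \<exists>v\<in>B. pres_eq S R (u @ v) w}),
       one = pres_class S R [] \<rparr>"

definition three_presentation :: "'a set \<Rightarrow> 'a word set \<Rightarrow> bool" where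
  "three_presentation S R \<longleftrightarrow> finite S \<and> finite R \<and>
     (\<forall>r\<in>R. word_on S r \<and> length r \<le> 3)"

definition Zn :: "nat \<Rightarrow> (nat \<Rightarrow> int) monoid" where
  "Zn n = product_group {..<n} (\<lambda>_. integer_group)"

definition subst_syl :: "'a \<Rightarrow> 'a \<Rightarrow> 'a \<Rightarrow> int \<Rightarrow> int \<Rightarrow> 'a \<times> int \<Rightarrow> 'a \<times> int" where
  "subst_syl g h i a b s =
     (if fst s = g then (i, b * snd s) else if fst s = h then (i, - a * snd s) else s)"

definition subst_word :: "'a \<Rightarrow> 'a \<Rightarrow> 'a \<Rightarrow> int \<Rightarrow> int \<Rightarrow> 'a word \<Rightarrow> 'a word" where
  "subst_word g h i a b w = map (subst_syl g h i a b) w"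

end

theory Submission
  imports Defs
begin

text \<open>A presentation defines \<open>\<int>\<^sup>n\<close> exactly when there is an assignment \<open>E\<close> of vectors
  in \<open>\<int>\<^sup>n\<close> to the generators whose exponent-sum map on words is onto and identifies
  precisely the words equal in the group. The relation \<open>g\<^sup>a h\<^sup>b = 1\<close> with \<open>p a + q b = 1\<close>
  makes \<open>g = (g\<^sup>q h\<^sup>-\<^sup>p)\<^sup>b\<close> and \<open>h = (g\<^sup>q h\<^sup>-\<^sup>p)\<^sup>-\<^sup>a\<close>, so the new generator \<open>i\<close> plays the role
  of \<open>g\<^sup>q h\<^sup>-\<^sup>p\<close> and receives the vector \<open>q E g - p E h\<close>. Substituting \<open>g \<mapsto> i\<^sup>b, h \<mapsto> i\<^sup>-\<^sup>a\<close>
  and back-substituting \<open>i \<mapsto> g\<^sup>q h\<^sup>-\<^sup>p\<close> preserve exponent vectors and map equal words to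
  equal words, and their composite is the identity up to equality in the new group;
  so the updated assignment again characterises the new presentation.\<close>

lemma word_on_append [simp]: "word_on S (u @ v) \<longleftrightarrow> word_on S u \<and> word_on S v"
  by (auto simp: word_on_def)

lemma word_on_Cons [simp]: "word_on S (s # v) \<longleftrightarrow> fst s \<in> S \<and> word_on S v"
  by (auto simp: word_on_def)

lemma word_on_Nil [simp]: "word_on S []"
  by (simp add: word_on_def)

lemma pres_eq_imp_word_on: "pres_eq S R u v \<Longrightarrow> word_on S u \<and> word_on S v"
  by (induction rule: pres_eq.induct) auto

lemma pres_class_eq_iff:
  assumes "word_on S u" "word_on S v"
  shows "pres_class S R u = pres_class S R v \<longleftrightarrow> pres_eq S R u v"
proof
  assume "pres_class S R u = pres_class S R v"
  moreover have "v \<in> pres_class S R v"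
    using assms by (simp add: pres_class_def pres_eq.refl)
  ultimately show "pres_eq S R u v"
    by (simp add: pres_class_def) blast
next
  assume "pres_eq S R u v"
  then show "pres_class S R u = pres_class S R v"
    unfolding pres_class_def by (blast intro: pres_eq.sym pres_eq.trans)
qed

lemma carrier_pres_group: "carrier (pres_group S R) = {pres_class S R w | w. word_on S w}"
  by (simp add: pres_group_def)

lemma pres_class_mult:
  assumes "word_on S u" "word_on S v"
  shows "pres_class S R u \<otimes>\<^bsub>pres_group S R\<^esub> pres_class S R v = pres_class S R (u @ v)"
proof -
  have "{w. \<exists>u'\<in>pres_class S R u. \<exists>v'\<in>pres_class S R v. pres_eq S R (u' @ v') w}
      = pres_class S R (u @ v)"
    using assms by (auto simp: pres_class_def intro: pres_eq.refl pres_eq.trans pres_eq.app)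
  then show ?thesis
    by (simp add: pres_group_def)
qed

lemma carrier_Zn: "carrier (Zn n) = (\<Pi>\<^sub>E j\<in>{..<n}. UNIV)"
  by (simp add: Zn_def)

lemma mult_Zn: "x \<otimes>\<^bsub>Zn n\<^esub> y = (\<lambda>j\<in>{..<n}. x j + y j)"
  by (simp add: Zn_def)

definition exp_sum :: "('a \<Rightarrow> int) \<Rightarrow> 'a word \<Rightarrow> int" where
  "exp_sum e w = (\<Sum>(x, k)\<leftarrow>w. k * e x)"

definition exp_vec :: "nat \<Rightarrow> ('a \<Rightarrow> nat \<Rightarrow> int) \<Rightarrow> 'a word \<Rightarrow> nat \<Rightarrow> int" where
  "exp_vec n E w = (\<lambda>j\<in>{..<n}. exp_sum (\<lambda>x. E x j) w)"

lemma exp_sum_simps [simp]: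
  "exp_sum e [] = 0"
  "exp_sum e (s # w) = snd s * e (fst s) + exp_sum e w"
  "exp_sum e (u @ w) = exp_sum e u + exp_sum e w"
  by (auto simp: exp_sum_def split: prod.split)

lemma exp_vec_eq_iff:
  "exp_vec n E u = exp_vec n E v \<longleftrightarrow> (\<forall>j<n. exp_sum (\<lambda>x. E x j) u = exp_sum (\<lambda>x. E x j) v)"
  by (auto simp: exp_vec_def restrict_def fun_eq_iff)

lemma exp_vec_in_carrier: "exp_vec n E w \<in> carrier (Zn n)"
  by (simp add: carrier_Zn exp_vec_def)

lemma exp_vec_append: "exp_vec n E (u @ v) = exp_vec n E u \<otimes>\<^bsub>Zn n\<^esub> exp_vec n E v"
  by (auto simp: mult_Zn exp_vec_def fun_eq_iff)

lemma pres_eq_imp_exp_sum_eq: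
  assumes "\<And>r. r \<in> R \<Longrightarrow> word_on S r \<Longrightarrow> exp_sum e r = 0"
    and "pres_eq S R u v"
  shows "exp_sum e u = exp_sum e v"
  using assms(2) by induction (auto simp: distrib_right assms(1))

definition Zn_coords :: "nat \<Rightarrow> 'a set \<Rightarrow> 'a word set \<Rightarrow> ('a \<Rightarrow> nat \<Rightarrow> int) \<Rightarrow> bool" where
  "Zn_coords n S R E \<longleftrightarrow>
     (\<forall>u v. word_on S u \<longrightarrow> word_on S v \<longrightarrow> pres_eq S R u v = (exp_vec n E u = exp_vec n E v))
     \<and> carrier (Zn n) \<subseteq> exp_vec n E ` {w. word_on S w}"

lemma additive_int_eq_mult:
  fixes f :: "int \<Rightarrow> int"
  assumes add: "\<And>a b. f (a + b) = f a + f b"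
  shows "f k = k * f 1"
proof -
  have f0: "f 0 = 0"
    using add[of 0 0] by simp
  have nat: "f (int m) = int m * f 1" for m
    by (induction m) (simp_all add: f0 add algebra_simps)
  show ?thesis
  proof (cases "k \<ge> 0")
    case True
    then show ?thesis using nat[of "nat k"] by simp
  next
    case False
    have "f k + f (- k) = 0"
      using add[of k "- k"] f0 by simp
    then show ?thesis
      using nat[of "nat (- k)"] False by simp
  qed
qed

lemma word_hom_eq_exp_vec:
  assumes closed: "\<And>w. word_on S w \<Longrightarrow> \<psi> w \<in> carrier (Zn n)"
    and mult: "\<And>u v. word_on S u \<Longrightarrow> word_on S v \<Longrightarrow> \<psi> (u @ v) = \<psi> u \<otimes>\<^bsub>Zn n\<^esub> \<psi> v"
    and merge: "\<And>x a b. x \<in> S \<Longrightarrow> \<psi> [(x, a), (x, b)] = \<psi> [(x, a + b)]"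
    and w: "word_on S w"
  shows "\<psi> w = exp_vec n (\<lambda>x. \<psi> [(x, 1)]) w"
proof -
  have mult_at: "\<psi> (u @ v) j = \<psi> u j + \<psi> v j"
    if "word_on S u" "word_on S v" "j < n" for u v j
    using mult[OF that(1,2)] that(3) by (simp add: mult_Zn)
  have syllable: "\<psi> [(x, k)] j = k * \<psi> [(x, 1)] j" if "x \<in> S" "j < n" for x k j
  proof (rule additive_int_eq_mult)
    fix a b
    show "\<psi> [(x, a + b)] j = \<psi> [(x, a)] j + \<psi> [(x, b)] j"
      using merge[OF that(1), of a b] mult_at[of "[(x, a)]" "[(x, b)]" j] that by simp
  qed
  have "\<psi> w j = exp_sum (\<lambda>x. \<psi> [(x, 1)] j) w" if "j < n" for j
    using w
  proof (induction w)
    case Nil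
    then show ?case using mult_at[of "[]" "[]" j] \<open>j < n\<close> by simp
  next
    case (Cons s w)
    then show ?case
      using mult_at[of "[s]" w j] syllable[of "fst s" j "snd s"] \<open>j < n\<close>
      by (cases s) simp
  qed
  moreover have "\<psi> w \<in> extensional {..<n}"
    using closed[OF w] by (simp add: carrier_Zn PiE_def)
  ultimately show ?thesis
    by (auto simp: exp_vec_def fun_eq_iff extensional_def)
qed

lemma Zn_coords_of_iso:
  assumes "pres_group S R \<cong> Zn n"
  obtains E where "Zn_coords n S R E"
proof -
  obtain \<phi> where hom: "\<phi> \<in> hom (pres_group S R) (Zn n)"
    and bij: "bij_betw \<phi> (carrier (pres_group S R)) (carrier (Zn n))"
    using assms by (auto simp: is_iso_def iso_def)
  define \<psi> where "\<psi> w = \<phi> (pres_class S R w)" for w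
  define E where "E x = \<psi> [(x, 1)]" for x
  have class_in_carrier: "word_on S w \<Longrightarrow> pres_class S R w \<in> carrier (pres_group S R)" for w
    by (auto simp: carrier_pres_group)
  have \<psi>_eq_iff: "\<psi> u = \<psi> v \<longleftrightarrow> pres_eq S R u v" if "word_on S u" "word_on S v" for u v
    using bij class_in_carrier[OF that(1)] class_in_carrier[OF that(2)] pres_class_eq_iff[OF that]
    unfolding \<psi>_def bij_betw_def by (metis inj_on_eq_iff)
  have \<psi>_exp_vec: "\<psi> w = exp_vec n E w" if "word_on S w" for w
    unfolding E_def
  proof (rule word_hom_eq_exp_vec[OF _ _ _ that])
    show "\<psi> w \<in> carrier (Zn n)" if "word_on S w" for w
      using hom class_in_carrier[OF that] unfolding \<psi>_def by (rule hom_in_carrier)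
    show "\<psi> (u @ v) = \<psi> u \<otimes>\<^bsub>Zn n\<^esub> \<psi> v" if "word_on S u" "word_on S v" for u v
      using hom class_in_carrier[OF that(1)] class_in_carrier[OF that(2)] pres_class_mult[OF that, of R]
      unfolding \<psi>_def by (metis hom_mult)
    show "\<psi> [(x, a), (x, b)] = \<psi> [(x, a + b)]" if "x \<in> S" for x a b
      using \<psi>_eq_iff pres_eq.merge[OF that] that by simp
  qed
  have "Zn_coords n S R E"
    unfolding Zn_coords_def
  proof (intro conjI allI impI subsetI)
    fix u v assume "word_on S u" "word_on S v"
    then show "pres_eq S R u v = (exp_vec n E u = exp_vec n E v)"
      using \<psi>_eq_iff \<psi>_exp_vec by metis
  next
    fix z assume "z \<in> carrier (Zn n)"
    then obtain w where "word_on S w" "z = \<psi> w"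
      using bij unfolding bij_betw_def \<psi>_def by (auto simp: carrier_pres_group)
    then show "z \<in> exp_vec n E ` {w. word_on S w}"
      using \<psi>_exp_vec by auto
  qed
  then show thesis by (rule that)
qed

lemma iso_of_Zn_coords:
  assumes coords: "Zn_coords n S R E"
  shows "pres_group S R \<cong> Zn n"
proof -
  have eq_iff: "pres_eq S R u v \<longleftrightarrow> exp_vec n E u = exp_vec n E v"
    if "word_on S u" "word_on S v" for u v
    using coords that by (simp add: Zn_coords_def)
  define \<phi> where "\<phi> C = exp_vec n E (SOME w. w \<in> C)" for C
  have \<phi>_class: "\<phi> (pres_class S R w) = exp_vec n E w" if w: "word_on S w" for w
  proof -
    have "w \<in> pres_class S R w"
      using w by (simp add: pres_class_def pres_eq.refl)
    then have "pres_eq S R w (SOME w'. w' \<in> pres_class S R w)"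
      by (metis pres_class_def mem_Collect_eq someI)
    then show ?thesis
      unfolding \<phi>_def using eq_iff pres_eq_imp_word_on by metis
  qed
  have "\<phi> \<in> iso (pres_group S R) (Zn n)"
  proof (rule isoI)
    show "\<phi> \<in> hom (pres_group S R) (Zn n)"
      by (rule homI)
        (auto simp: carrier_pres_group \<phi>_class exp_vec_in_carrier pres_class_mult exp_vec_append)
    have "inj_on \<phi> (carrier (pres_group S R))"
    proof (rule inj_onI)
      fix C D assume "C \<in> carrier (pres_group S R)" "D \<in> carrier (pres_group S R)" "\<phi> C = \<phi> D"
      then obtain u v where "word_on S u" "word_on S v" "C = pres_class S R u" "D = pres_class S R v"
        "exp_vec n E u = exp_vec n E v"
        by (auto simp: carrier_pres_group \<phi>_class)
      then show "C = D"
        by (simp add: pres_class_eq_iff eq_iff)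
    qed
    moreover have "\<phi> ` carrier (pres_group S R) = exp_vec n E ` {w. word_on S w}"
    proof -
      have "carrier (pres_group S R) = pres_class S R ` {w. word_on S w}"
        by (auto simp: carrier_pres_group)
      then show ?thesis
        by (simp add: image_image \<phi>_class cong: image_cong_simp)
    qed
    moreover have "exp_vec n E ` {w. word_on S w} = carrier (Zn n)"
      using coords exp_vec_in_carrier by (auto simp: Zn_coords_def)
    ultimately show "bij_betw \<phi> (carrier (pres_group S R)) (carrier (Zn n))"
      by (simp add: bij_betw_def)
  qed
  then show ?thesis by (rule is_isoI)
qed

lemma subst_word_simps [simp]:
  "subst_word g h i a b [] = []"
  "subst_word g h i a b (s # w) = subst_syl g h i a b s # subst_word g h i a b w"
  "subst_word g h i a b (u @ w) = subst_word g h i a b u @ subst_word g h i a b w"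
  "length (subst_word g h i a b w) = length w"
  by (auto simp: subst_word_def)

lemma word_on_subst_word:
  assumes "word_on S w" "i \<noteq> g" "i \<noteq> h"
  shows "word_on ((S \<union> {i}) - {g, h}) (subst_word g h i a b w)"
  using assms by (induction w) (auto simp: subst_syl_def)

lemma three_presentation_subst_word:
  assumes "three_presentation S R" "i \<noteq> g" "i \<noteq> h"
  shows "three_presentation ((S \<union> {i}) - {g, h}) (subst_word g h i a b ` R)"
  using assms word_on_subst_word by (fastforce simp: three_presentation_def)

lemma exp_sum_subst_word:
  assumes "word_on S w" "i \<notin> S"
    and "a * e g + b * e h = 0" "p * a + q * b = 1"
  shows "exp_sum (e(i := q * e g - p * e h)) (subst_word g h i a b w) = exp_sum e w"
proof -
  define c where "c = q * e g - p * e h"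
  have "b * c = e g * (p * a + q * b) - p * (a * e g + b * e h)"
    by (simp add: c_def algebra_simps)
  then have g: "b * c = e g"
    using assms(3,4) by simp
  have "- a * c = e h * (p * a + q * b) - q * (a * e g + b * e h)"
    by (simp add: c_def algebra_simps)
  then have h: "- a * c = e h"
    using assms(3,4) by simp
  have syllable: "snd (subst_syl g h i a b s) * (e(i := c)) (fst (subst_syl g h i a b s))
      = snd s * e (fst s)" if "fst s \<in> S" for s
    using that assms(2) g h by (auto simp: subst_syl_def simp flip: g h)
  from assms(1) show ?thesis
    unfolding c_def[symmetric] by (induction w) (simp_all add: syllable del: fun_upd_apply)
qed

lemma pres_eq_subst_word:
  assumes "pres_eq S R u v" "i \<noteq> g" "i \<noteq> h"
  shows "pres_eq ((S \<union> {i}) - {g, h}) (subst_word g h i a b ` R)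
    (subst_word g h i a b u) (subst_word g h i a b v)"
  using assms(1)
proof induction
  case (refl w)
  then show ?case
    using assms(2,3) by (intro pres_eq.refl word_on_subst_word)
next
  case (sym u v)
  from sym.IH show ?case by (rule pres_eq.sym)
next
  case (trans u v w)
  from trans.IH show ?case by (rule pres_eq.trans)
next
  case (app u u' v v')
  then show ?case by (simp add: pres_eq.app)
next
  case (merge x a' b')
  have i: "i \<in> (S \<union> {i}) - {g, h}"
    using assms(2,3) by simp
  show ?case
    using merge assms(2,3) pres_eq.merge[OF i, of _ "b * a'" "b * b'"]
      pres_eq.merge[OF i, of _ "- a * a'" "- a * b'"] pres_eq.merge[of x _ _ a' b']
    by (simp add: subst_syl_def distrib_left)
next
  case (zero x)
  then show ?case
    using assms(2,3) pres_eq.zero[of i] pres_eq.zero[of x] by (simp add: subst_syl_def)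
next
  case (rel r)
  then have "pres_eq ((S \<union> {i}) - {g, h}) (subst_word g h i a b ` R) (subst_word g h i a b r) []"
    using assms(2,3) by (intro pres_eq.rel imageI word_on_subst_word)
  then show ?case by simp
qed

text \<open>Back-substitution \<open>i \<mapsto> g\<^sup>q h\<^sup>-\<^sup>p\<close>; for \<open>p a + q b = 1\<close> it inverts \<open>subst_word g h i a b\<close>
  up to equality in the new group.\<close>

definition unsubst_word :: "'a \<Rightarrow> 'a \<Rightarrow> 'a \<Rightarrow> int \<Rightarrow> int \<Rightarrow> 'a word \<Rightarrow> 'a word" where
  "unsubst_word g h i p q w =
     concat (map (\<lambda>(x, k). if x = i then [(g, q * k), (h, - p * k)] else [(x, k)]) w)"

lemma unsubst_word_simps [simp]:
  "unsubst_word g h i p q [] = []"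
  "unsubst_word g h i p q ((x, k) # w) =
     (if x = i then [(g, q * k), (h, - p * k)] else [(x, k)]) @ unsubst_word g h i p q w"
  by (simp_all add: unsubst_word_def)

lemma word_on_unsubst_word:
  assumes "word_on ((S \<union> {i}) - {g, h}) w" "g \<in> S" "h \<in> S"
  shows "word_on S (unsubst_word g h i p q w)"
  using assms by (induction w) auto

lemma exp_sum_unsubst_word:
  "exp_sum e (unsubst_word g h i p q w) = exp_sum (e(i := q * e g - p * e h)) w"
  by (induction w) (auto simp: algebra_simps)

lemma pres_eq_subst_unsubst_word:
  assumes "word_on ((S \<union> {i}) - {g, h}) w" "g \<noteq> h" "p * a + q * b = 1"
  shows "pres_eq ((S \<union> {i}) - {g, h}) R (subst_word g h i a b (unsubst_word g h i p q w)) w"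
  using assms(1)
proof (induction w)
  case Nil
  then show ?case by (simp add: pres_eq.refl)
next
  case (Cons s w)
  obtain x k where s: "s = (x, k)" by (cases s)
  have "pres_eq ((S \<union> {i}) - {g, h}) R (subst_word g h i a b (unsubst_word g h i p q [s])) [s]"
  proof (cases "x = i")
    case True
    have "b * (q * k) + - a * (- p * k) = k * (p * a + q * b)"
      by (simp add: algebra_simps)
    then have "b * (q * k) + - a * (- p * k) = k"
      using assms(3) by simp
    then show ?thesis
      using True s Cons.prems assms(2) pres_eq.merge[of i _ R "b * (q * k)" "- a * (- p * k)"]
      by (simp add: subst_syl_def)
  next
    case False
    then show ?thesis
      using s Cons.prems by (auto simp: subst_syl_def intro: pres_eq.refl)
  qed
  then show ?case
    using Cons pres_eq.app by (fastforce simp: s)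
qed

lemma fun_upd_coord: "(\<lambda>x. (E(i := F)) x j) = (\<lambda>x. E x j)(i := F j)"
  by auto

lemma exp_vec_subst_word:
  assumes "word_on S w" "i \<notin> S"
    and "\<And>j. j < n \<Longrightarrow> a * E g j + b * E h j = 0" "p * a + q * b = 1"
  shows "exp_vec n (E(i := \<lambda>j. q * E g j - p * E h j)) (subst_word g h i a b w) = exp_vec n E w"
proof -
  have "exp_sum ((\<lambda>x. E x j)(i := q * E g j - p * E h j)) (subst_word g h i a b w)
      = exp_sum (\<lambda>x. E x j) w" if "j < n" for j
    using assms(1,2) assms(3)[OF that] assms(4) by (rule exp_sum_subst_word)
  then show ?thesis
    unfolding exp_vec_def fun_upd_coord by (intro restrict_ext) (simp del: fun_upd_apply)
qed

lemma exp_vec_unsubst_word: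
  "exp_vec n E (unsubst_word g h i p q w) = exp_vec n (E(i := \<lambda>j. q * E g j - p * E h j)) w"
  unfolding exp_vec_def fun_upd_coord exp_sum_unsubst_word ..

lemma Zn_coords_subst_word:
  assumes coords: "Zn_coords n S R E" and R: "\<And>r. r \<in> R \<Longrightarrow> word_on S r"
    and "g \<in> S" "h \<in> S" "g \<noteq> h" "i \<notin> S"
    and rel: "pres_eq S R [(g, a), (h, b)] []" and bezout: "p * a + q * b = 1"
  shows "Zn_coords n ((S \<union> {i}) - {g, h}) (subst_word g h i a b ` R)
    (E(i := \<lambda>j. q * E g j - p * E h j))"
proof -
  let ?S' = "(S \<union> {i}) - {g, h}" and ?R' = "subst_word g h i a b ` R"
    and ?E' = "E(i := \<lambda>j. q * E g j - p * E h j)"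
    and ?F = "subst_word g h i a b" and ?H = "unsubst_word g h i p q"
  have i: "i \<noteq> g" "i \<noteq> h"
    using assms(3,4,6) by auto
  have eq_iff: "pres_eq S R u v \<longleftrightarrow> exp_vec n E u = exp_vec n E v"
    if "word_on S u" "word_on S v" for u v
    using coords that by (simp add: Zn_coords_def)
  have "a * E g j + b * E h j = 0" if "j < n" for j
    using eq_iff[of "[(g, a), (h, b)]" "[]"] rel assms(3,4) that by (simp add: exp_vec_eq_iff)
  then have vec_subst: "exp_vec n ?E' (?F w) = exp_vec n E w" if "word_on S w" for w
    using that \<open>i \<notin> S\<close> bezout by (intro exp_vec_subst_word)
  have "exp_vec n ?E' (?F r) = exp_vec n ?E' []" if "r \<in> R" for r
    using vec_subst[OF R[OF that]] eq_iff[OF R[OF that] word_on_Nil] pres_eq.rel[OF that R[OF that]]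
    by (simp add: exp_vec_def)
  then have "exp_sum (\<lambda>x. ?E' x j) r' = 0" if "r' \<in> ?R'" "j < n" for r' j
    using that by (auto simp: exp_vec_eq_iff)
  then have sound: "exp_vec n ?E' u = exp_vec n ?E' v" if "pres_eq ?S' ?R' u v" for u v
    unfolding exp_vec_eq_iff using that by (blast intro: pres_eq_imp_exp_sum_eq)
  have complete: "pres_eq ?S' ?R' u v"
    if "word_on ?S' u" "word_on ?S' v" "exp_vec n ?E' u = exp_vec n ?E' v" for u v
  proof -
    have "pres_eq S R (?H u) (?H v)"
      using that assms(3,4) by (simp add: eq_iff word_on_unsubst_word exp_vec_unsubst_word)
    then have "pres_eq ?S' ?R' (?F (?H u)) (?F (?H v))"
      using i by (rule pres_eq_subst_word)
    then show ?thesis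
      using pres_eq_subst_unsubst_word[OF _ \<open>g \<noteq> h\<close> bezout] that(1,2)
      by (meson pres_eq.sym pres_eq.trans)
  qed
  have "carrier (Zn n) \<subseteq> exp_vec n ?E' ` {w. word_on ?S' w}"
  proof
    fix z assume "z \<in> carrier (Zn n)"
    then obtain w where "word_on S w" "z = exp_vec n E w"
      using coords by (auto simp: Zn_coords_def)
    then show "z \<in> exp_vec n ?E' ` {w. word_on ?S' w}"
      using vec_subst word_on_subst_word i by (metis (mono_tags) image_eqI mem_Collect_eq)
  qed
  moreover have "pres_eq ?S' ?R' u v = (exp_vec n ?E' u = exp_vec n ?E' v)"
    if "word_on ?S' u" "word_on ?S' v" for u v
    using sound complete that by blast
  ultimately show ?thesis
    unfolding Zn_coords_def by blast
qed

theorem mainTheorem10: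
  fixes S :: "'a set" and R :: "'a word set" and g h i :: 'a and a b :: int and n :: nat
  assumes "three_presentation S R"
    and "pres_group S R \<cong> Zn n"
    and "g \<in> S" and "h \<in> S" and "g \<noteq> h"
    and "a \<noteq> 0" and "b \<noteq> 0" and "coprime a b"
    and "pres_eq S R [(g, a), (h, b)] []"
    and "i \<notin> S"
  shows "three_presentation ((S \<union> {i}) - {g, h}) (subst_word g h i a b ` R)
    \<and> pres_group ((S \<union> {i}) - {g, h}) (subst_word g h i a b ` R) \<cong> Zn n"
proof
  show "three_presentation ((S \<union> {i}) - {g, h}) (subst_word g h i a b ` R)"
    using assms(1,3,4,10) by (intro three_presentation_subst_word) auto
  obtain E where "Zn_coords n S R E"
    using assms(2) by (rule Zn_coords_of_iso)
  moreover obtain p q where "p * a + q * b = 1"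
    using bezout_int[of a b] assms(8) by (auto simp: coprime_iff_gcd_eq_1)
  moreover have "\<And>r. r \<in> R \<Longrightarrow> word_on S r"
    using assms(1) by (simp add: three_presentation_def)
  ultimately have "Zn_coords n ((S \<union> {i}) - {g, h}) (subst_word g h i a b ` R)
      (E(i := \<lambda>j. q * E g j - p * E h j))"
    using assms(3-5,9,10) by (intro Zn_coords_subst_word)
  then show "pres_group ((S \<union> {i}) - {g, h}) (subst_word g h i a b ` R) \<cong> Zn n"
    by (rule iso_of_Zn_coords)
qed

end
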